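(* Let $(Q,\mathcal S)$ be a hypergraph with $Q=\{q_1,\dots,q_m\}$ and $\mathcal S=\{S_1,\dots,S_n\}$, where $n\ge 2$, every $S_j$ is a nonempty subset of $Q$, and $S_n=Q$. Let $G'$ be the graph constructed from $(Q,\mathcal S)$ as follows. Its vertex set consists of the vertices $q_1,\dots,q_m$; vertices $S_1,\dots,S_n$; vertices $S_1',\dots,S_n'$; a vertex $q^i_j$ for every pair $(i,j)$ with $q_i\in S_j$ (let $Q'$ be the set of these); and vertices $u_1,v,w,x$. Its edges are: $q^i_jq_i$ and $q^i_jS_j$ for every $q^i_j\in Q'$; $q_iS_j'$ whenever $q_i\in S_j$; $S_jS_k'$ for all $j,k\in\{1,\dots,n\}$; $u_1S_j$ for every $j$; $u_1v$; $wS_j'$ for every $j$; and $xv$, $xw$. Then $(Q,\mathcal S)$ has a $2$-colouring if and only if $G'$ contains the cycle $C_6$ on six vertices as a contraction.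
   Context: A $2$-colouring of a hypergraph $(Q,\mathcal S)$ is a partition $(Q_1,Q_2)$ of $Q$ such that $Q_1\cap S\neq\emptyset$ and $Q_2\cap S\neq\emptyset$ for every $S\in\mathcal S$. Contracting an edge $uv$ means deleting $u$ and $v$ and adding a new vertex adjacent to $(N(u)\cup N(v))\setminus\{u,v\}$ (no multiple edges or loops). A graph contains $H$ as a contraction if $H$ can be obtained from it by a sequence of edge contractions. *)

theory Defs
  imports Main
begin

type_synonym 'a graph = "'a set \<times> 'a set set"

definition simple_graph :: "'a graph \<Rightarrow> bool" where
  "simple_graph G \<longleftrightarrow> finite (fst G) \<and> (\<forall>e\<in>snd G. e \<subseteq> fst G \<and> card e = 2)"

text \<open>Contracting the edge uv: delete u and v and add a new vertex adjacent to
  (N(u) \<union> N(v)) - {u,v}. We name the new vertex u (which is legitimate since u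
  has been deleted), so the result is v deleted and u adjacent to N(u) \<union> N(v) - {u,v}.\<close>
definition contract_edge :: "'a graph \<Rightarrow> 'a \<Rightarrow> 'a \<Rightarrow> 'a graph" where
  "contract_edge G u v =
     (fst G - {v},
      {e \<in> snd G. v \<notin> e} \<union> {{u, w} | w. {v, w} \<in> snd G \<and> w \<noteq> u})"

inductive contracts_to :: "'a graph \<Rightarrow> 'a graph \<Rightarrow> bool" for G :: "'a graph" where
  refl: "contracts_to G G"
| step: "contracts_to G H \<Longrightarrow> {u, v} \<in> snd H \<Longrightarrow> u \<noteq> v \<Longrightarrow> contracts_to G (contract_edge H u v)"

definition graph_iso :: "'a graph \<Rightarrow> 'b graph \<Rightarrow> bool" where
  "graph_iso G H \<longleftrightarrow> (\<exists>f. bij_betw f (fst G) (fst H) \<and>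
      (\<forall>x\<in>fst G. \<forall>y\<in>fst G. {x, y} \<in> snd G \<longleftrightarrow> {f x, f y} \<in> snd H))"

definition has_contraction :: "'a graph \<Rightarrow> 'b graph \<Rightarrow> bool" where
  "has_contraction G H \<longleftrightarrow> (\<exists>K. contracts_to G K \<and> graph_iso K H)"

definition C6 :: "nat graph" where
  "C6 = ({0..<6}, {{i, (i + 1) mod 6} | i. i < 6})"

definition two_colouring :: "'q set \<Rightarrow> 'q set set \<Rightarrow> 'q set \<Rightarrow> 'q set \<Rightarrow> bool" where
  "two_colouring Q \<S> Q1 Q2 \<longleftrightarrow> Q1 \<union> Q2 = Q \<and> Q1 \<inter> Q2 = {} \<and>
     (\<forall>S\<in>\<S>. Q1 \<inter> S \<noteq> {} \<and> Q2 \<inter> S \<noteq> {})"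

datatype 'q vtx = Qv 'q | Sv nat | Sp nat | Qp 'q nat | U1 | Vv | Wv | Xv

definition G' :: "'q set \<Rightarrow> (nat \<Rightarrow> 'q set) \<Rightarrow> nat \<Rightarrow> 'q vtx graph" where
  "G' Q S n =
    (Qv ` Q \<union> Sv ` {1..n} \<union> Sp ` {1..n} \<union> {Qp q j | q j. j \<in> {1..n} \<and> q \<in> S j}
       \<union> {U1, Vv, Wv, Xv},
     {{Qp q j, Qv q} | q j. j \<in> {1..n} \<and> q \<in> S j}
     \<union> {{Qp q j, Sv j} | q j. j \<in> {1..n} \<and> q \<in> S j}
     \<union> {{Qv q, Sp j} | q j. j \<in> {1..n} \<and> q \<in> S j}
     \<union> {{Sv j, Sp k} | j k. j \<in> {1..n} \<and> k \<in> {1..n}}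
     \<union> {{U1, Sv j} | j. j \<in> {1..n}}
     \<union> {{U1, Vv}}
     \<union> {{Wv, Sp j} | j. j \<in> {1..n}}
     \<union> {{Xv, Vv}, {Xv, Wv}})"

end

theory Submission
  imports Defs
begin

text \<open>
  A graph contracts to H exactly when some map from its vertices onto those of H has connected
  fibres and maps the edges onto the edges of H. For G' and C6 this is a labelling of the
  vertices by 0,...,5 whose classes are connected, whose edges join equal or adjacent labels,
  and which realises every edge of the cycle.

  From a 2-colouring (Q1, Q2) one labels u1, v, x, w by 0, 1, 2, 3, the S'_j and the vertices
  q_i, q^i_j with q_i in Q1 by 4, and the S_j and the remaining q_i, q^i_j by 5; the classes 4
  and 5 are connected because every S_j meets both Q1 and Q2, and S_n = Q.

  Conversely, the labels of the S_j and the S'_k are pairwise adjacent or equal, hence lie in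
  the closed neighbourhood of some label m. Every vertex other than v and x is adjacent to an
  S_j or an S'_k, so the antipode of m labels only v or x. Following the 6-cycle
  u1 v x w S'_1 S_1 of G' around this label shows that u1, v, x, w carry four consecutive
  labels, which an automorphism of C6 turns into 0, 1, 2, 3. Then all S_j get 5, all S'_j
  get 4 and every q_i gets 4 or 5; connectivity of the classes 4 and 5 forces every S_j to
  contain a q_i of each label.
\<close>

definition connected_set :: "'a graph \<Rightarrow> 'a set \<Rightarrow> bool" where
  "connected_set G X \<longleftrightarrow>
     (\<forall>Y. Y \<subseteq> X \<longrightarrow> Y \<noteq> {} \<longrightarrow> Y \<noteq> X \<longrightarrow> (\<exists>a\<in>Y. \<exists>b\<in>X - Y. {a, b} \<in> snd G))"

lemma connected_set_subset_singleton: "X \<subseteq> {x} \<Longrightarrow> connected_set G X"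
  unfolding connected_set_def by blast

lemma connected_set_neighbour:
  assumes "connected_set G X" "a \<in> X" "X \<noteq> {a}"
  obtains b where "b \<in> X" "b \<noteq> a" "{a, b} \<in> snd G"
proof -
  have "{a} \<subseteq> X" "{a} \<noteq> {}" "{a} \<noteq> X" using assms(2,3) by auto
  then show ?thesis
    using that assms(1)[unfolded connected_set_def, rule_format, of "{a}"] by blast
qed

lemma connected_set_Un:
  assumes "connected_set G A" "connected_set G B" "a \<in> A" "b \<in> B" "{a, b} \<in> snd G"
  shows "connected_set G (A \<union> B)"
  unfolding connected_set_def
proof (intro allI impI)
  fix Y assume Y: "Y \<subseteq> A \<union> B" "Y \<noteq> {}" "Y \<noteq> A \<union> B"
  show "\<exists>x\<in>Y. \<exists>y\<in>A \<union> B - Y. {x, y} \<in> snd G"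
  proof (cases "Y \<inter> A = {} \<or> A \<subseteq> Y")
    case False
    then show ?thesis
      using assms(1)[unfolded connected_set_def, rule_format, of "Y \<inter> A"] by blast
  next
    case A: True
    show ?thesis
    proof (cases "Y \<inter> B = {} \<or> B \<subseteq> Y")
      case False
      then show ?thesis
        using assms(2)[unfolded connected_set_def, rule_format, of "Y \<inter> B"] by blast
    next
      case True
      with A Y assms(3,4) have "a \<in> Y \<and> b \<notin> Y \<or> a \<notin> Y \<and> b \<in> Y" by blast
      then show ?thesis
      proof
        assume "a \<in> Y \<and> b \<notin> Y"
        then show ?thesis using assms(4,5) by blast
      next
        assume "a \<notin> Y \<and> b \<in> Y"
        then show ?thesis using assms(3,5) by (metis DiffI UnCI insert_commute)
      qed
    qed
  qed
qed

lemma rtrancl_leaves_set: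
  assumes "(x, y) \<in> R\<^sup>*" "x \<in> Y" "y \<notin> Y"
  shows "\<exists>a b. (a, b) \<in> R \<and> a \<in> Y \<and> b \<notin> Y"
  using assms by (induction rule: rtrancl_induct) auto

definition adjacent_in :: "'a graph \<Rightarrow> 'a set \<Rightarrow> ('a \<times> 'a) set" where
  "adjacent_in G X = {(a, b). a \<in> X \<and> b \<in> X \<and> {a, b} \<in> snd G}"

lemma adjacent_in_rtrancl_step:
  "{a, b} \<in> snd G \<Longrightarrow> a \<in> X \<Longrightarrow> b \<in> X \<Longrightarrow> (b, c) \<in> (adjacent_in G X)\<^sup>*
    \<Longrightarrow> (a, c) \<in> (adjacent_in G X)\<^sup>*"
  by (rule converse_rtrancl_into_rtrancl) (auto simp: adjacent_in_def)

lemma connected_set_if_reachable: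
  assumes "c \<in> X" and reach: "\<And>x. x \<in> X \<Longrightarrow> (x, c) \<in> (adjacent_in G X)\<^sup>*"
  shows "connected_set G X"
  unfolding connected_set_def
proof (intro allI impI)
  let ?R = "adjacent_in G X"
  fix Y assume Y: "Y \<subseteq> X" "Y \<noteq> {}" "Y \<noteq> X"
  obtain a b where ab: "(a, b) \<in> ?R" "a \<in> Y \<and> b \<notin> Y \<or> a \<notin> Y \<and> b \<in> Y"
  proof (cases "c \<in> Y")
    case True
    obtain x where "x \<in> X" "x \<notin> Y" using Y by blast
    with reach True obtain a b where "(a, b) \<in> ?R" "a \<in> - Y" "b \<notin> - Y"
      using rtrancl_leaves_set[of x c ?R "- Y"] by blast
    then show ?thesis using that by blast
  next
    case False
    obtain y where "y \<in> Y" using Y by blast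
    with reach False Y(1) obtain a b where "(a, b) \<in> ?R" "a \<in> Y" "b \<notin> Y"
      using rtrancl_leaves_set[of y c ?R Y] by blast
    then show ?thesis using that by blast
  qed
  then have "a \<in> X" "b \<in> X" "{a, b} \<in> snd G" "{b, a} \<in> snd G"
    unfolding adjacent_in_def by (auto simp: insert_commute)
  with ab(2) show "\<exists>a\<in>Y. \<exists>b\<in>X - Y. {a, b} \<in> snd G" by blast
qed

section \<open>Contractions as quotients by maps with connected fibres\<close>

definition quotient_graph :: "'a graph \<Rightarrow> ('a \<Rightarrow> 'b) \<Rightarrow> 'b graph" where
  "quotient_graph G \<phi> = (\<phi> ` fst G, {{\<phi> a, \<phi> c} | a c. {a, c} \<in> snd G \<and> \<phi> a \<noteq> \<phi> c})"

definition connected_fibres :: "'a graph \<Rightarrow> ('a \<Rightarrow> 'b) \<Rightarrow> bool" where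
  "connected_fibres G \<phi> \<longleftrightarrow> (\<forall>x\<in>fst G. connected_set G {y \<in> fst G. \<phi> y = \<phi> x})"

lemma edge_distinct: "simple_graph G \<Longrightarrow> {a, c} \<in> snd G \<Longrightarrow> a \<noteq> c"
  unfolding simple_graph_def by fastforce

lemma edge_vertices: "simple_graph G \<Longrightarrow> {a, c} \<in> snd G \<Longrightarrow> a \<in> fst G \<and> c \<in> fst G"
  unfolding simple_graph_def by blast

lemma connected_set_image:
  assumes "connected_set G X"
  shows "connected_set (quotient_graph G \<pi>) (\<pi> ` X)"
  unfolding connected_set_def
proof (intro allI impI)
  fix Y assume Y: "Y \<subseteq> \<pi> ` X" "Y \<noteq> {}" "Y \<noteq> \<pi> ` X"
  have "X \<inter> \<pi> -` Y \<subseteq> X" "X \<inter> \<pi> -` Y \<noteq> {}" "X \<inter> \<pi> -` Y \<noteq> X"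
    using Y by auto
  then obtain a c where "a \<in> X \<inter> \<pi> -` Y" "c \<in> X - \<pi> -` Y" "{a, c} \<in> snd G"
    using assms[unfolded connected_set_def, rule_format, of "X \<inter> \<pi> -` Y"] by blast
  then have "\<pi> a \<in> Y" "\<pi> c \<in> \<pi> ` X - Y" "{\<pi> a, \<pi> c} \<in> snd (quotient_graph G \<pi>)"
    unfolding quotient_graph_def by force+
  then show "\<exists>a\<in>Y. \<exists>b\<in>\<pi> ` X - Y. {a, b} \<in> snd (quotient_graph G \<pi>)" by blast
qed

lemma simple_graph_quotient_graph:
  "simple_graph G \<Longrightarrow> simple_graph (quotient_graph G \<phi>)"
  unfolding simple_graph_def quotient_graph_def by (fastforce simp: card_2_iff)

lemma quotient_graph_id:
  assumes "simple_graph G"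
  shows "quotient_graph G id = G"
proof -
  have "snd G = {{a, c} | a c. {a, c} \<in> snd G \<and> a \<noteq> c}"
    using assms unfolding simple_graph_def by (fastforce simp: card_2_iff)
  then show ?thesis unfolding quotient_graph_def by (simp add: prod_eq_iff)
qed

lemma quotient_graph_cong:
  assumes "simple_graph G" "\<And>x. x \<in> fst G \<Longrightarrow> \<phi> x = \<psi> x"
  shows "quotient_graph G \<phi> = quotient_graph G \<psi>"
proof -
  have "{{\<phi> a, \<phi> c} | a c. {a, c} \<in> snd G \<and> \<phi> a \<noteq> \<phi> c}
      = {{\<psi> a, \<psi> c} | a c. {a, c} \<in> snd G \<and> \<psi> a \<noteq> \<psi> c}"
  proof -
    have eq: "\<phi> a = \<psi> a \<and> \<phi> c = \<psi> c" if "{a, c} \<in> snd G" for a c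
      using edge_vertices[OF assms(1) that] assms(2) by simp
    show ?thesis by (rule Collect_cong) (metis eq)
  qed
  moreover have "\<phi> ` fst G = \<psi> ` fst G" using assms(2) by auto
  ultimately show ?thesis unfolding quotient_graph_def by simp
qed

lemma quotient_graph_comp:
  "quotient_graph (quotient_graph G \<phi>) \<psi> = quotient_graph G (\<psi> \<circ> \<phi>)"
proof -
  let ?E = "{{\<phi> a, \<phi> c} | a c. {a, c} \<in> snd G \<and> \<phi> a \<noteq> \<phi> c}"
  have "{{\<psi> a, \<psi> c} | a c. {a, c} \<in> ?E \<and> \<psi> a \<noteq> \<psi> c}
      = {{\<psi> (\<phi> a), \<psi> (\<phi> c)} | a c. {a, c} \<in> snd G \<and> \<psi> (\<phi> a) \<noteq> \<psi> (\<phi> c)}"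
  proof (intro set_eqI iffI)
    fix e assume "e \<in> {{\<psi> a, \<psi> c} | a c. {a, c} \<in> ?E \<and> \<psi> a \<noteq> \<psi> c}"
    then obtain a c a' c' where "e = {\<psi> a', \<psi> c'}" "{a', c'} = {\<phi> a, \<phi> c}"
      "{a, c} \<in> snd G" "\<psi> a' \<noteq> \<psi> c'" by blast
    moreover from this have "e = {\<psi> (\<phi> a), \<psi> (\<phi> c)}" "\<psi> (\<phi> a) \<noteq> \<psi> (\<phi> c)"
      by (auto simp: doubleton_eq_iff insert_commute)
    ultimately show "e \<in> {{\<psi> (\<phi> a), \<psi> (\<phi> c)} | a c. {a, c} \<in> snd G \<and> \<psi> (\<phi> a) \<noteq> \<psi> (\<phi> c)}"
      by blast
  next
    fix e assume "e \<in> {{\<psi> (\<phi> a), \<psi> (\<phi> c)} | a c. {a, c} \<in> snd G \<and> \<psi> (\<phi> a) \<noteq> \<psi> (\<phi> c)}"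
    then obtain a c where "e = {\<psi> (\<phi> a), \<psi> (\<phi> c)}" "{a, c} \<in> snd G" "\<psi> (\<phi> a) \<noteq> \<psi> (\<phi> c)"
      by blast
    then show "e \<in> {{\<psi> a, \<psi> c} | a c. {a, c} \<in> ?E \<and> \<psi> a \<noteq> \<psi> c}" by fastforce
  qed
  then show ?thesis unfolding quotient_graph_def by (simp add: image_comp)
qed

lemma connected_fibres_comp_inj:
  assumes "connected_fibres G \<phi>" "inj_on f (\<phi> ` fst G)"
  shows "connected_fibres G (f \<circ> \<phi>)"
proof -
  have "{y \<in> fst G. f (\<phi> y) = f (\<phi> x)} = {y \<in> fst G. \<phi> y = \<phi> x}" if "x \<in> fst G" for x
    using assms(2) that by (auto dest: inj_onD)
  then show ?thesis using assms(1) unfolding connected_fibres_def by simp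
qed

lemma contracts_to_trans: "contracts_to H K \<Longrightarrow> contracts_to G H \<Longrightarrow> contracts_to G K"
  by (induction rule: contracts_to.induct) (auto intro: contracts_to.step)

lemma contract_edge_eq_quotient_graph:
  assumes "simple_graph G" "{u, v} \<in> snd G"
  shows "contract_edge G u v = quotient_graph G (\<lambda>x. if x = v then u else x)"
proof -
  let ?\<pi> = "\<lambda>x. if x = v then u else x"
  have uv: "u \<in> fst G" "v \<in> fst G" "u \<noteq> v"
    using edge_vertices[OF assms] edge_distinct[OF assms] by auto
  have "?\<pi> ` fst G = fst G - {v}" using uv by auto
  moreover have "{e \<in> snd G. v \<notin> e} \<union> {{u, w} |w. {v, w} \<in> snd G \<and> w \<noteq> u}
      = {{?\<pi> a, ?\<pi> c} | a c. {a, c} \<in> snd G \<and> ?\<pi> a \<noteq> ?\<pi> c}"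
  proof (intro set_eqI iffI)
    fix e assume "e \<in> {e \<in> snd G. v \<notin> e} \<union> {{u, w} |w. {v, w} \<in> snd G \<and> w \<noteq> u}"
    then show "e \<in> {{?\<pi> a, ?\<pi> c} | a c. {a, c} \<in> snd G \<and> ?\<pi> a \<noteq> ?\<pi> c}"
    proof (elim UnE CollectE conjE exE)
      assume "e \<in> snd G" "v \<notin> e"
      moreover obtain a c where "e = {a, c}" "a \<noteq> c"
        using \<open>e \<in> snd G\<close> assms(1) unfolding simple_graph_def by (meson card_2_iff)
      ultimately show ?thesis by force
    next
      fix w assume "e = {u, w}" "{v, w} \<in> snd G" "w \<noteq> u"
      moreover have "w \<noteq> v" using edge_distinct[OF assms(1) \<open>{v, w} \<in> snd G\<close>] by simp
      ultimately show ?thesis by (intro CollectI exI[of _ v] exI[of _ w]) auto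
    qed
  next
    fix e assume "e \<in> {{?\<pi> a, ?\<pi> c} | a c. {a, c} \<in> snd G \<and> ?\<pi> a \<noteq> ?\<pi> c}"
    then obtain a c where e: "e = {?\<pi> a, ?\<pi> c}" "{a, c} \<in> snd G" "?\<pi> a \<noteq> ?\<pi> c" by blast
    then show "e \<in> {e \<in> snd G. v \<notin> e} \<union> {{u, w} |w. {v, w} \<in> snd G \<and> w \<noteq> u}"
      by (cases "a = v"; cases "c = v") (auto simp: insert_commute)
  qed
  ultimately show ?thesis unfolding contract_edge_def quotient_graph_def by simp
qed

lemma connected_fibres_merge_adjacent:
  assumes "simple_graph G" "connected_fibres G r" "{u, v} \<in> snd (quotient_graph G r)"
  shows "connected_fibres G ((\<lambda>k. if k = v then u else k) \<circ> r)"
  unfolding connected_fibres_def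
proof
  let ?\<pi> = "\<lambda>k. if k = v then u else k"
  let ?F = "\<lambda>k. {y \<in> fst G. r y = k}"
  have conn: "connected_set G (?F (r y))" if "y \<in> fst G" for y
    using assms(2) that unfolding connected_fibres_def by simp
  fix x assume x: "x \<in> fst G"
  show "connected_set G {y \<in> fst G. (?\<pi> \<circ> r) y = (?\<pi> \<circ> r) x}"
  proof (cases "?\<pi> (r x) = u")
    case True
    obtain a c where ac: "{u, v} = {r a, r c}" "{a, c} \<in> snd G"
      using assms(3) unfolding quotient_graph_def by auto
    then have "a \<in> fst G" "c \<in> fst G" using edge_vertices[OF assms(1)] by auto
    with ac have "connected_set G (?F u \<union> ?F v)"
      using conn connected_set_Un[of G "?F (r a)" "?F (r c)" a c]
        connected_set_Un[of G "?F (r c)" "?F (r a)" c a]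
      by (auto simp: doubleton_eq_iff insert_commute Un_commute)
    moreover have "{y \<in> fst G. (?\<pi> \<circ> r) y = (?\<pi> \<circ> r) x} = ?F u \<union> ?F v"
      using True by auto
    ultimately show ?thesis by simp
  next
    case False
    then have "{y \<in> fst G. (?\<pi> \<circ> r) y = (?\<pi> \<circ> r) x} = ?F (r x)" by auto
    then show ?thesis using conn[OF x] by simp
  qed
qed

lemma contracts_to_quotient_form:
  assumes "contracts_to G K" "simple_graph G"
  shows "\<exists>\<phi>. connected_fibres G \<phi> \<and> K = quotient_graph G \<phi>"
  using assms
proof (induction rule: contracts_to.induct)
  case refl
  have "connected_fibres G id"
    unfolding connected_fibres_def by (auto intro: connected_set_subset_singleton)
  then show ?case using quotient_graph_id[OF refl] by metis
next
  case (step K u v)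
  then obtain r where r: "connected_fibres G r" "K = quotient_graph G r" by blast
  let ?\<pi> = "\<lambda>k. if k = v then u else k"
  have "simple_graph K" using r(2) simple_graph_quotient_graph[OF step.prems] by simp
  then have "contract_edge K u v = quotient_graph K ?\<pi>"
    using step.hyps(2) by (rule contract_edge_eq_quotient_graph)
  also have "\<dots> = quotient_graph G (?\<pi> \<circ> r)" by (simp add: r(2) quotient_graph_comp)
  finally have contracted: "contract_edge K u v = quotient_graph G (?\<pi> \<circ> r)" .
  have "{u, v} \<in> snd (quotient_graph G r)" using step.hyps(2) r(2) by simp
  then have "connected_fibres G (?\<pi> \<circ> r)" by (rule connected_fibres_merge_adjacent[OF step.prems r(1)])
  with contracted show ?case by blast
qed

lemma connected_fibres_merge_vertex:
  assumes "connected_fibres G \<rho>" "b \<in> fst G" "\<rho> b = \<rho> v"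
  shows "connected_fibres (quotient_graph G (\<lambda>x. if x = v then b else x)) \<rho>"
  unfolding connected_fibres_def
proof
  let ?\<pi> = "\<lambda>x. if x = v then b else x"
  have \<rho>\<pi>: "\<rho> (?\<pi> x) = \<rho> x" for x using assms(3) by simp
  fix x assume "x \<in> fst (quotient_graph G ?\<pi>)"
  then have x: "x \<in> fst G" using assms(2) unfolding quotient_graph_def by auto
  have "connected_set G {y \<in> fst G. \<rho> y = \<rho> x}"
    using assms(1) x unfolding connected_fibres_def by (rule bspec)
  then have "connected_set (quotient_graph G ?\<pi>) (?\<pi> ` {y \<in> fst G. \<rho> y = \<rho> x})"
    by (rule connected_set_image)
  moreover have "?\<pi> ` {y \<in> fst G. \<rho> y = \<rho> x} = {y \<in> fst (quotient_graph G ?\<pi>). \<rho> y = \<rho> x}"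
  proof (intro set_eqI iffI)
    fix y assume "y \<in> ?\<pi> ` {y \<in> fst G. \<rho> y = \<rho> x}"
    then show "y \<in> {y \<in> fst (quotient_graph G ?\<pi>). \<rho> y = \<rho> x}"
      unfolding quotient_graph_def using assms(3) by auto
  next
    fix y assume "y \<in> {y \<in> fst (quotient_graph G ?\<pi>). \<rho> y = \<rho> x}"
    then obtain z where "z \<in> fst G" "y = ?\<pi> z" "\<rho> y = \<rho> x"
      unfolding quotient_graph_def by auto
    then show "y \<in> ?\<pi> ` {y \<in> fst G. \<rho> y = \<rho> x}" using \<rho>\<pi>[of z] by auto
  qed
  ultimately show "connected_set (quotient_graph G ?\<pi>) {y \<in> fst (quotient_graph G ?\<pi>). \<rho> y = \<rho> x}"
    by simp
qed

lemma contracts_to_quotient_graph: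
  assumes "simple_graph G" "connected_fibres G \<rho>"
    and "\<And>x. x \<in> fst G \<Longrightarrow> \<rho> x \<in> fst G \<and> \<rho> (\<rho> x) = \<rho> x"
  shows "contracts_to G (quotient_graph G \<rho>)"
  using assms
proof (induction "card (fst G)" arbitrary: G rule: less_induct)
  case less
  show ?case
  proof (cases "\<forall>x\<in>fst G. \<rho> x = x")
    case True
    then have "quotient_graph G \<rho> = G"
      using quotient_graph_cong[OF less.prems(1), of \<rho> id] quotient_graph_id[OF less.prems(1)] by simp
    then show ?thesis by (metis contracts_to.refl)
  next
    case False
    then obtain v where v: "v \<in> fst G" "\<rho> v \<noteq> v" by blast
    let ?F = "{y \<in> fst G. \<rho> y = \<rho> v}"
    have F: "connected_set G ?F" "v \<in> ?F" "\<rho> v \<in> ?F"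
      using less.prems(2,3) v unfolding connected_fibres_def by auto
    then have "?F \<noteq> {v}" using v(2) by blast
    then obtain b where b: "b \<in> ?F" "b \<noteq> v" "{v, b} \<in> snd G"
      by (rule connected_set_neighbour[OF F(1,2)])
    let ?\<pi> = "\<lambda>x. if x = v then b else x"
    define G1 where "G1 = contract_edge G b v"
    have bv: "{b, v} \<in> snd G" using b(3) by (simp add: insert_commute)
    have G1: "G1 = quotient_graph G ?\<pi>"
      unfolding G1_def using contract_edge_eq_quotient_graph[OF less.prems(1) bv] .
    have V1: "fst G1 = fst G - {v}" unfolding G1_def contract_edge_def by simp
    have "card (fst G1) < card (fst G)"
      unfolding V1 using less.prems(1) v(1) unfolding simple_graph_def by (intro card_Diff1_less) auto
    moreover have "simple_graph G1" using G1 simple_graph_quotient_graph[OF less.prems(1)] by simp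
    moreover have "connected_fibres G1 \<rho>"
      unfolding G1 using connected_fibres_merge_vertex[OF less.prems(2)] b(1) by simp
    moreover have "\<rho> x \<in> fst G1 \<and> \<rho> (\<rho> x) = \<rho> x" if "x \<in> fst G1" for x
      using that less.prems(3) v unfolding V1 by (metis Diff_iff singletonD)
    ultimately have "contracts_to G1 (quotient_graph G1 \<rho>)" by (rule less.hyps)
    moreover have "quotient_graph G1 \<rho> = quotient_graph G \<rho>"
      unfolding G1 quotient_graph_comp using quotient_graph_cong[OF less.prems(1), of "\<rho> \<circ> ?\<pi>" \<rho>] b(1)
      by simp
    moreover have "contracts_to G G1"
      unfolding G1_def using contracts_to.step[OF contracts_to.refl bv b(2)] .
    ultimately show ?thesis by (metis contracts_to_trans)
  qed
qed

lemma graph_iso_quotient_graph: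
  assumes "simple_graph K" "inj_on f (fst K)"
  shows "graph_iso K (quotient_graph K f)"
  unfolding graph_iso_def
proof (intro exI conjI ballI)
  have inj: "p = q" if "p \<in> fst K" "q \<in> fst K" "f p = f q" for p q
    using assms(2) that by (simp add: inj_on_def)
  show "bij_betw f (fst K) (fst (quotient_graph K f))"
    using assms(2) unfolding quotient_graph_def bij_betw_def by simp
  fix x y assume xy: "x \<in> fst K" "y \<in> fst K"
  show "{x, y} \<in> snd K \<longleftrightarrow> {f x, f y} \<in> snd (quotient_graph K f)"
  proof
    assume "{x, y} \<in> snd K"
    moreover from this have "f x \<noteq> f y"
      using edge_distinct[OF assms(1)] inj xy by blast
    ultimately show "{f x, f y} \<in> snd (quotient_graph K f)"
      unfolding quotient_graph_def snd_conv by blast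
  next
    assume "{f x, f y} \<in> snd (quotient_graph K f)"
    then obtain a c where ac: "{f x, f y} = {f a, f c}" "{a, c} \<in> snd K"
      unfolding quotient_graph_def snd_conv by blast
    then have "a \<in> fst K" "c \<in> fst K" using edge_vertices[OF assms(1)] by auto
    moreover have "f x = f a \<and> f y = f c \<or> f x = f c \<and> f y = f a"
      using ac(1) by (simp add: doubleton_eq_iff)
    ultimately have "x = a \<and> y = c \<or> x = c \<and> y = a" using inj xy by metis
    with ac(2) show "{x, y} \<in> snd K" by (auto simp: insert_commute)
  qed
qed

lemma graph_iso_imp_quotient_graph:
  assumes "simple_graph K" "simple_graph H" "graph_iso K H"
  obtains f where "inj_on f (fst K)" "H = quotient_graph K f"
proof -
  obtain f where f: "bij_betw f (fst K) (fst H)"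
    and edges: "\<forall>x\<in>fst K. \<forall>y\<in>fst K. {x, y} \<in> snd K \<longleftrightarrow> {f x, f y} \<in> snd H"
    using assms(3) unfolding graph_iso_def by (elim exE conjE)
  have "snd H = {{f a, f c} | a c. {a, c} \<in> snd K \<and> f a \<noteq> f c}"
  proof (intro set_eqI iffI)
    fix e assume e: "e \<in> snd H"
    then obtain x' y' where e': "e = {x', y'}" "x' \<noteq> y'"
      using assms(2) unfolding simple_graph_def by (meson card_2_iff)
    then have "x' \<in> f ` fst K" "y' \<in> f ` fst K"
      using edge_vertices[OF assms(2)] e f unfolding bij_betw_def by auto
    then obtain x y where xy: "x \<in> fst K" "y \<in> fst K" "x' = f x" "y' = f y" by (elim imageE)
    with e e' edges have "{x, y} \<in> snd K" by simp
    with e' xy show "e \<in> {{f a, f c} | a c. {a, c} \<in> snd K \<and> f a \<noteq> f c}" by blast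
  next
    fix e assume "e \<in> {{f a, f c} | a c. {a, c} \<in> snd K \<and> f a \<noteq> f c}"
    then obtain a c where ac: "e = {f a, f c}" "{a, c} \<in> snd K" by blast
    with edges edge_vertices[OF assms(1) ac(2)] show "e \<in> snd H" by simp
  qed
  moreover have "fst H = f ` fst K" using f unfolding bij_betw_def by simp
  ultimately have "H = quotient_graph K f" unfolding quotient_graph_def by (simp add: prod_eq_iff)
  moreover have "inj_on f (fst K)" using f unfolding bij_betw_def by simp
  ultimately show ?thesis using that by simp
qed

lemma has_contraction_quotient_graph:
  assumes "simple_graph G" "connected_fibres G \<phi>"
  shows "has_contraction G (quotient_graph G \<phi>)"
proof -
  define rep where "rep k = (SOME x. x \<in> fst G \<and> \<phi> x = k)" for k
  have rep: "rep (\<phi> x) \<in> fst G \<and> \<phi> (rep (\<phi> x)) = \<phi> x" if "x \<in> fst G" for x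
    unfolding rep_def by (rule someI[where x = x]) (simp add: that)
  let ?\<rho> = "rep \<circ> \<phi>"
  have \<phi>\<rho>: "\<phi> (?\<rho> x) = \<phi> x" if "x \<in> fst G" for x using rep[OF that] by simp
  have "inj_on rep (\<phi> ` fst G)"
  proof (rule inj_onI)
    fix k k' assume "k \<in> \<phi> ` fst G" "k' \<in> \<phi> ` fst G" "rep k = rep k'"
    then show "k = k'" using \<phi>\<rho> by (auto simp: image_iff) metis
  qed
  then have "connected_fibres G ?\<rho>" by (rule connected_fibres_comp_inj[OF assms(2)])
  moreover have "?\<rho> x \<in> fst G \<and> ?\<rho> (?\<rho> x) = ?\<rho> x" if "x \<in> fst G" for x
    using rep[OF that] by simp
  ultimately have "contracts_to G (quotient_graph G ?\<rho>)"
    by (rule contracts_to_quotient_graph[OF assms(1)])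
  moreover have "graph_iso (quotient_graph G ?\<rho>) (quotient_graph (quotient_graph G ?\<rho>) \<phi>)"
  proof (rule graph_iso_quotient_graph)
    show "simple_graph (quotient_graph G ?\<rho>)" using simple_graph_quotient_graph[OF assms(1)] .
    show "inj_on \<phi> (fst (quotient_graph G ?\<rho>))"
      unfolding quotient_graph_def fst_conv by (rule inj_onI) (auto simp: rep)
  qed
  moreover have "quotient_graph (quotient_graph G ?\<rho>) \<phi> = quotient_graph G \<phi>"
    unfolding quotient_graph_comp using quotient_graph_cong[OF assms(1), of "\<phi> \<circ> ?\<rho>" \<phi>] \<phi>\<rho> by simp
  ultimately show ?thesis
    unfolding has_contraction_def by (intro exI[of _ "quotient_graph G ?\<rho>"]) simp
qed

theorem has_contraction_iff_quotient_graph: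
  assumes "simple_graph G" "simple_graph H"
  shows "has_contraction G H \<longleftrightarrow> (\<exists>\<phi>. connected_fibres G \<phi> \<and> quotient_graph G \<phi> = H)"
proof
  assume "has_contraction G H"
  then obtain K where "contracts_to G K" "graph_iso K H" unfolding has_contraction_def by blast
  moreover obtain r where r: "connected_fibres G r" "K = quotient_graph G r"
    using contracts_to_quotient_form[OF \<open>contracts_to G K\<close> assms(1)] by blast
  moreover have "simple_graph K" using r(2) simple_graph_quotient_graph[OF assms(1)] by simp
  ultimately obtain f where "inj_on f (fst K)" "H = quotient_graph K f"
    using graph_iso_imp_quotient_graph[OF _ assms(2)] by blast
  with r(2) have "inj_on f (r ` fst G)" "H = quotient_graph G (f \<circ> r)"
    by (simp_all add: quotient_graph_comp) (simp add: quotient_graph_def)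
  then show "\<exists>\<phi>. connected_fibres G \<phi> \<and> quotient_graph G \<phi> = H"
    using connected_fibres_comp_inj[OF r(1)] by metis
next
  assume "\<exists>\<phi>. connected_fibres G \<phi> \<and> quotient_graph G \<phi> = H"
  then show "has_contraction G H" using has_contraction_quotient_graph[OF assms(1)] by blast
qed

definition near :: "nat \<Rightarrow> nat \<Rightarrow> bool" where
  "near a b \<longleftrightarrow> a = b \<or> a = Suc b \<or> b = Suc a \<or> (a = 0 \<and> b = 5) \<or> (a = 5 \<and> b = 0)"

lemma near_refl [simp]: "near a a"
  unfolding near_def by simp

lemma near_commute: "near a b \<longleftrightarrow> near b a"
  unfolding near_def by auto

lemma less_6E:
  assumes "(x::nat) < 6"
  obtains "x = 0" | "x = 1" | "x = 2" | "x = 3" | "x = 4" | "x = 5"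
  using assms by linarith

lemma ex_less_6: "(\<exists>k<(6::nat). P k) \<longleftrightarrow> P 0 \<or> P 1 \<or> P 2 \<or> P 3 \<or> P 4 \<or> P 5"
proof
  assume "\<exists>k<6. P k"
  then obtain k where "k < 6" "P k" by blast
  then show "P 0 \<or> P 1 \<or> P 2 \<or> P 3 \<or> P 4 \<or> P 5" by (elim less_6E) simp_all
qed force

lemma C6_edge_iff: "{i, j} \<in> snd C6 \<longleftrightarrow> i < 6 \<and> j < 6 \<and> i \<noteq> j \<and> near i j"
proof
  assume "{i, j} \<in> snd C6"
  then obtain k where "k < 6" "{i, j} = {k, (k + 1) mod 6}"
    unfolding C6_def snd_conv mem_Collect_eq by blast
  then show "i < 6 \<and> j < 6 \<and> i \<noteq> j \<and> near i j"
    by (elim less_6E) (auto simp: doubleton_eq_iff near_def)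
next
  assume "i < 6 \<and> j < 6 \<and> i \<noteq> j \<and> near i j"
  then have "i < 6" "j < 6" "i \<noteq> j" "near i j" by simp_all
  then have "\<exists>k<6. {i, j} = {k, (k + 1) mod 6}"
    unfolding ex_less_6 by (elim less_6E) (simp_all add: doubleton_eq_iff near_def)
  then show "{i, j} \<in> snd C6" unfolding C6_def snd_conv mem_Collect_eq by blast
qed

lemma C6_edge_cases:
  assumes "e \<in> snd C6"
  obtains i j where "e = {i, j}" "{i, j} \<in> snd C6"
  using assms unfolding C6_def by auto

lemma simple_graph_C6: "simple_graph C6"
  unfolding simple_graph_def
proof
  show "finite (fst C6)" unfolding C6_def by simp
  show "\<forall>e\<in>snd C6. e \<subseteq> fst C6 \<and> card e = 2"
  proof
    fix e assume "e \<in> snd C6"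
    then obtain i j where "e = {i, j}" "{i, j} \<in> snd C6" by (rule C6_edge_cases)
    then show "e \<subseteq> fst C6 \<and> card e = 2" unfolding C6_edge_iff by (auto simp: C6_def)
  qed
qed

lemma quotient_graph_eq_C6D:
  assumes Q: "quotient_graph G \<phi> = C6"
  shows "\<phi> ` fst G = {0..<6}"
    and "{a, c} \<in> snd G \<Longrightarrow> near (\<phi> a) (\<phi> c)"
    and "{i, j} \<in> snd C6 \<Longrightarrow> \<exists>a c. {a, c} \<in> snd G \<and> \<phi> a = i \<and> \<phi> c = j"
proof -
  show "\<phi> ` fst G = {0..<6}" using arg_cong[OF Q, of fst] unfolding quotient_graph_def C6_def by simp
next
  assume ac: "{a, c} \<in> snd G"
  show "near (\<phi> a) (\<phi> c)"
  proof (cases "\<phi> a = \<phi> c")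
    case False
    with ac have "{\<phi> a, \<phi> c} \<in> snd (quotient_graph G \<phi>)"
      unfolding quotient_graph_def snd_conv by blast
    then show ?thesis using Q C6_edge_iff by simp
  qed simp
next
  assume "{i, j} \<in> snd C6"
  then have "{i, j} \<in> snd (quotient_graph G \<phi>)" using Q by simp
  then obtain a c where ac: "{i, j} = {\<phi> a, \<phi> c}" "{a, c} \<in> snd G"
    unfolding quotient_graph_def snd_conv by blast
  then have "{c, a} \<in> snd G" by (simp add: insert_commute)
  with ac show "\<exists>a c. {a, c} \<in> snd G \<and> \<phi> a = i \<and> \<phi> c = j"
    by (auto simp: doubleton_eq_iff)
qed

lemma quotient_graph_eq_C6I:
  assumes "simple_graph G" and V: "\<phi> ` fst G = {0..<6}"
    and N: "\<And>a c. {a, c} \<in> snd G \<Longrightarrow> near (\<phi> a) (\<phi> c)"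
    and R: "\<And>i j. {i, j} \<in> snd C6 \<Longrightarrow> \<exists>a c. {a, c} \<in> snd G \<and> \<phi> a = i \<and> \<phi> c = j"
  shows "quotient_graph G \<phi> = C6"
proof -
  have "{{\<phi> a, \<phi> c} | a c. {a, c} \<in> snd G \<and> \<phi> a \<noteq> \<phi> c} = snd C6"
  proof (intro set_eqI iffI)
    fix e assume "e \<in> {{\<phi> a, \<phi> c} | a c. {a, c} \<in> snd G \<and> \<phi> a \<noteq> \<phi> c}"
    then obtain a c where ac: "e = {\<phi> a, \<phi> c}" "{a, c} \<in> snd G" "\<phi> a \<noteq> \<phi> c" by blast
    then have "\<phi> a < 6" "\<phi> c < 6" using V edge_vertices[OF assms(1)] by fastforce+
    with ac N show "e \<in> snd C6" by (simp add: C6_edge_iff)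
  next
    fix e assume "e \<in> snd C6"
    then obtain i j where e: "e = {i, j}" "{i, j} \<in> snd C6" by (rule C6_edge_cases)
    then obtain a c where "{a, c} \<in> snd G" "\<phi> a = i" "\<phi> c = j" using R by blast
    moreover have "i \<noteq> j" using e(2) C6_edge_iff by simp
    ultimately show "e \<in> {{\<phi> a, \<phi> c} | a c. {a, c} \<in> snd G \<and> \<phi> a \<noteq> \<phi> c}" using e(1) by blast
  qed
  with V show ?thesis unfolding quotient_graph_def C6_def by simp
qed

lemma quotient_graph_C6_automorphism:
  assumes "\<And>i. i < 6 \<Longrightarrow> \<sigma> i < 6" "\<And>i j. i < 6 \<Longrightarrow> j < 6 \<Longrightarrow> \<sigma> i = \<sigma> j \<Longrightarrow> i = j"
    and "\<And>i j. i < 6 \<Longrightarrow> j < 6 \<Longrightarrow> near (\<sigma> i) (\<sigma> j) \<longleftrightarrow> near i j"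
  shows "quotient_graph C6 \<sigma> = C6"
proof -
  have "inj_on \<sigma> {0..<6}" using assms(2) by (auto intro: inj_onI)
  then have onto: "\<sigma> ` {0..<6} = {0..<6}"
    using assms(1) by (intro endo_inj_surj) auto
  show ?thesis
  proof (rule quotient_graph_eq_C6I[OF simple_graph_C6])
    show "\<sigma> ` fst C6 = {0..<6}" using onto unfolding C6_def by simp
  next
    fix a c assume "{a, c} \<in> snd C6"
    then show "near (\<sigma> a) (\<sigma> c)" using assms(3) C6_edge_iff by simp
  next
    fix i j assume ij: "{i, j} \<in> snd C6"
    then have "i \<in> \<sigma> ` {0..<6}" "j \<in> \<sigma> ` {0..<6}" using onto C6_edge_iff by auto
    then obtain a c where "a < 6" "c < 6" "\<sigma> a = i" "\<sigma> c = j" by auto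
    with ij assms(3) have "{a, c} \<in> snd C6" by (auto simp: C6_edge_iff)
    with \<open>\<sigma> a = i\<close> \<open>\<sigma> c = j\<close> show "\<exists>a c. {a, c} \<in> snd C6 \<and> \<sigma> a = i \<and> \<sigma> c = j" by blast
  qed
qed

lemma C6_rotation: "a < 6 \<Longrightarrow> quotient_graph C6 (\<lambda>y. (y + 6 - a) mod 6) = C6"
  by (rule quotient_graph_C6_automorphism) (elim less_6E; simp add: near_def)+

lemma C6_reflection: "a < 6 \<Longrightarrow> quotient_graph C6 (\<lambda>y. (a + 6 - y) mod 6) = C6"
  by (rule quotient_graph_C6_automorphism) (elim less_6E; simp add: near_def)+

lemma C6_edge_normalisation:
  assumes "{a, b} \<in> snd C6"
  obtains \<sigma> where "quotient_graph C6 \<sigma> = C6" "\<sigma> a = 0" "\<sigma> b = 1"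
proof -
  have "a < 6" "b < 6" "near a b" "a \<noteq> b" using assms unfolding C6_edge_iff by simp_all
  then consider "b = (a + 1) mod 6" | "a = (b + 1) mod 6"
    by (elim less_6E) (simp_all add: near_def)
  then show ?thesis
  proof cases
    case 1
    with \<open>a < 6\<close> show ?thesis
      using that[OF C6_rotation[of a]] by (elim less_6E) simp_all
  next
    case 2
    with \<open>a < 6\<close> \<open>b < 6\<close> show ?thesis
      using that[OF C6_reflection[of a]] by (elim less_6E) simp_all
  qed
qed

lemma C6_automorphism_inj: "quotient_graph C6 \<sigma> = C6 \<Longrightarrow> inj_on \<sigma> {0..<6}"
  by (rule eq_card_imp_inj_on) (auto simp: quotient_graph_def C6_def)

lemma C6_relabel:
  assumes "quotient_graph G \<phi> = C6" "connected_fibres G \<phi>" "quotient_graph C6 \<sigma> = C6"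
  shows "quotient_graph G (\<sigma> \<circ> \<phi>) = C6" "connected_fibres G (\<sigma> \<circ> \<phi>)"
proof -
  show "quotient_graph G (\<sigma> \<circ> \<phi>) = C6" using assms(1,3) quotient_graph_comp by metis
  have "inj_on \<sigma> (\<phi> ` fst G)"
    using C6_automorphism_inj[OF assms(3)] quotient_graph_eq_C6D(1)[OF assms(1)] by simp
  then show "connected_fibres G (\<sigma> \<circ> \<phi>)" by (rule connected_fibres_comp_inj[OF assms(2)])
qed

lemma near_common_neighbour_unique:
  "a < 6 \<Longrightarrow> a' < 6 \<Longrightarrow> b < 6 \<Longrightarrow> b' < 6 \<Longrightarrow> near a b \<Longrightarrow> near a b' \<Longrightarrow> near a' b \<Longrightarrow> near a' b'
    \<Longrightarrow> \<not> near a a' \<Longrightarrow> b = b'"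
  unfolding near_def by auto

lemma near_antipode: "m < 6 \<Longrightarrow> y < 6 \<Longrightarrow> near m y \<Longrightarrow> \<not> near ((m + 3) mod 6) y"
  by (elim less_6E) (simp_all add: near_def)

lemma near_bicomplete_centre:
  assumes "a \<in> A" "b \<in> B" "A \<subseteq> {..<6}" "B \<subseteq> {..<6}" and near: "\<forall>x\<in>A. \<forall>y\<in>B. near x y"
  obtains m where "m < 6" "\<forall>y\<in>A \<union> B. near m y"
proof (cases "\<forall>x\<in>A. near a x")
  case True
  moreover have "\<forall>y\<in>B. near a y" using near assms(1) by blast
  ultimately show ?thesis using that[of a] assms(1,3) by blast
next
  case False
  then obtain a' where a': "a' \<in> A" "\<not> near a a'" by blast
  have "y = b" if "y \<in> B" for y
    by (rule near_common_neighbour_unique[of a a' y b]) (use assms a' that in auto)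
  then have "\<forall>y\<in>B. near b y" by simp
  moreover have "\<forall>x\<in>A. near b x" using near assms(2) near_commute by blast
  ultimately show ?thesis using that[of b] assms(2,4) by blast
qed

lemma near_walk_from_1_to_5:
  "{p, q} = {1, 5} \<Longrightarrow> a < 6 \<Longrightarrow> b < 6 \<Longrightarrow> near p a \<Longrightarrow> near a b \<Longrightarrow> near b q \<Longrightarrow> a = 0 \<or> b = 0"
  by (auto simp: doubleton_eq_iff near_def)

text \<open>
  The closed walk u v x w t s visits the label 0 only at v or x, and both neighbours 1 and 5
  of 0 occur next to such a visit. Since a walk from 1 to 5 that avoids 0 needs at least four
  steps, the labels u, v, x, w cannot repeat.
\<close>

lemma closed_walk_through_0_distinct:
  fixes u v x w t s :: nat
  assumes lt: "u < 6" "v < 6" "x < 6" "w < 6" "t < 6" "s < 6"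
    and walk: "near u v" "near v x" "near x w" "near w t" "near t s" "near s u"
    and nonzero: "u \<noteq> 0" "w \<noteq> 0" "t \<noteq> 0" "s \<noteq> 0"
    and realised: "\<And>j. j = 1 \<or> j = 5 \<Longrightarrow> v = 0 \<and> (u = j \<or> x = j) \<or> x = 0 \<and> (v = j \<or> w = j)"
  shows "distinct [u, v, x, w]"
proof -
  have detour: "a = 0 \<or> b = 0" if "{p, q} = {1, 5}" "near p a" "near a b" "near b q" "a < 6" "b < 6"
    for p q a b
    using near_walk_from_1_to_5 that by blast
  have reversed: "near v u" "near u s" "near s t" "near t w" "near w x"
    using walk near_commute by blast+
  have r1: "v = 0 \<and> (u = 1 \<or> x = 1) \<or> x = 0 \<and> (v = 1 \<or> w = 1)"
    and r5: "v = 0 \<and> (u = 5 \<or> x = 5) \<or> x = 0 \<and> (v = 5 \<or> w = 5)"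
    using realised by blast+
  have "v \<noteq> x"
  proof
    assume "v = x"
    with r1 r5 have "{u, w} = {1, 5}" by auto
    with detour[of u w s t] reversed lt nonzero show False by blast
  qed
  with r1 r5 consider "v = 0" "{u, x} = {1, 5}" | "x = 0" "{v, w} = {1, 5}"
    by (auto simp: doubleton_eq_iff)
  then show ?thesis
  proof cases
    case 1
    have "w \<noteq> x"
    proof
      assume "w = x"
      with 1 detour[of x u t s] walk(4-6) lt nonzero show False by (auto simp: insert_commute)
    qed
    moreover have "w \<noteq> u" using 1 walk(3) by (auto simp: doubleton_eq_iff near_def)
    ultimately show ?thesis using 1 nonzero by (auto simp: doubleton_eq_iff)
  next
    case 2
    have "u \<noteq> v"
    proof
      assume "u = v"
      with 2 detour[of v w s t] reversed lt nonzero show False by auto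
    qed
    moreover have "u \<noteq> w" using 2 walk(1) by (auto simp: doubleton_eq_iff near_def)
    ultimately show ?thesis using 2 nonzero by (auto simp: doubleton_eq_iff)
  qed
qed

lemma near_0_and_3:
  "s < 6 \<Longrightarrow> t < 6 \<Longrightarrow> near 0 s \<Longrightarrow> near 3 t \<Longrightarrow> near s t \<Longrightarrow> s = 1 \<and> t = 2 \<or> s = 5 \<and> t = 4"
  by (auto simp: near_def)

lemma G'_vertices [simp]:
  "Qv q \<in> fst (G' Q S n) \<longleftrightarrow> q \<in> Q"
  "Sv j \<in> fst (G' Q S n) \<longleftrightarrow> j \<in> {1..n}"
  "Sp j \<in> fst (G' Q S n) \<longleftrightarrow> j \<in> {1..n}"
  "Qp q j \<in> fst (G' Q S n) \<longleftrightarrow> j \<in> {1..n} \<and> q \<in> S j"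
  "U1 \<in> fst (G' Q S n)" "Vv \<in> fst (G' Q S n)" "Wv \<in> fst (G' Q S n)" "Xv \<in> fst (G' Q S n)"
  unfolding G'_def by auto

context
  fixes Q :: "'q set" and S :: "nat \<Rightarrow> 'q set" and n :: nat
begin

lemma edge_Qp_Qv: "j \<in> {1..n} \<Longrightarrow> q \<in> S j \<Longrightarrow> {Qp q j, Qv q} \<in> snd (G' Q S n)"
  by (simp add: G'_def doubleton_eq_iff)

lemma edge_Qp_Sv: "j \<in> {1..n} \<Longrightarrow> q \<in> S j \<Longrightarrow> {Qp q j, Sv j} \<in> snd (G' Q S n)"
  by (simp add: G'_def doubleton_eq_iff)

lemma edge_Qv_Sp: "j \<in> {1..n} \<Longrightarrow> q \<in> S j \<Longrightarrow> {Qv q, Sp j} \<in> snd (G' Q S n)"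
  by (simp add: G'_def doubleton_eq_iff)

lemma edge_Sv_Sp: "j \<in> {1..n} \<Longrightarrow> k \<in> {1..n} \<Longrightarrow> {Sv j, Sp k} \<in> snd (G' Q S n)"
  by (simp add: G'_def doubleton_eq_iff)

lemma edge_U1_Sv: "j \<in> {1..n} \<Longrightarrow> {U1, Sv j} \<in> snd (G' Q S n)"
  by (simp add: G'_def doubleton_eq_iff)

lemma edge_U1_Vv: "{U1, Vv} \<in> snd (G' Q S n)"
  by (simp add: G'_def doubleton_eq_iff)

lemma edge_Wv_Sp: "j \<in> {1..n} \<Longrightarrow> {Wv, Sp j} \<in> snd (G' Q S n)"
  by (simp add: G'_def doubleton_eq_iff)

lemma edge_Vv_Xv: "{Vv, Xv} \<in> snd (G' Q S n)"
  by (simp add: G'_def doubleton_eq_iff)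

lemma edge_Xv_Wv: "{Xv, Wv} \<in> snd (G' Q S n)"
  by (simp add: G'_def doubleton_eq_iff)

lemma neighbour_U1: "{U1, b} \<in> snd (G' Q S n) \<Longrightarrow> b = Vv \<or> (\<exists>j\<in>{1..n}. b = Sv j)"
  unfolding G'_def by (auto simp: doubleton_eq_iff)

lemma neighbour_Vv: "{Vv, b} \<in> snd (G' Q S n) \<Longrightarrow> b = U1 \<or> b = Xv"
  unfolding G'_def by (auto simp: doubleton_eq_iff)

lemma neighbour_Xv: "{Xv, b} \<in> snd (G' Q S n) \<Longrightarrow> b = Vv \<or> b = Wv"
  unfolding G'_def by (auto simp: doubleton_eq_iff)

lemma neighbour_Wv: "{Wv, b} \<in> snd (G' Q S n) \<Longrightarrow> b = Xv \<or> (\<exists>j\<in>{1..n}. b = Sp j)"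
  unfolding G'_def by (auto simp: doubleton_eq_iff)

lemma neighbour_Sv:
  "{Sv j, b} \<in> snd (G' Q S n) \<Longrightarrow> b = U1 \<or> (\<exists>k\<in>{1..n}. b = Sp k) \<or> (\<exists>q\<in>S j. b = Qp q j)"
  unfolding G'_def by (auto simp: doubleton_eq_iff)

lemma neighbour_Sp:
  "{Sp j, b} \<in> snd (G' Q S n) \<Longrightarrow> b = Wv \<or> (\<exists>k\<in>{1..n}. b = Sv k) \<or> (\<exists>q\<in>S j. b = Qv q)"
  unfolding G'_def by (auto simp: doubleton_eq_iff)

lemma neighbour_Qp: "{Qp q j, b} \<in> snd (G' Q S n) \<Longrightarrow> b = Qv q \<or> b = Sv j"
  unfolding G'_def by (auto simp: doubleton_eq_iff)

lemma simple_graph_G':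
  assumes "finite Q" "\<forall>j\<in>{1..n}. S j \<subseteq> Q"
  shows "simple_graph (G' Q S n)"
  unfolding simple_graph_def
proof
  have "finite {Qp q j | q j. q \<in> Q \<and> j \<in> {1..n}}"
    using assms(1) by (intro finite_image_set2) auto
  moreover have "{Qp q j | q j. j \<in> {1..n} \<and> q \<in> S j} \<subseteq> {Qp q j | q j. q \<in> Q \<and> j \<in> {1..n}}"
    using assms(2) by blast
  ultimately have "finite {Qp q j | q j. j \<in> {1..n} \<and> q \<in> S j}"
    by (rule finite_subset[rotated])
  then show "finite (fst (G' Q S n))" using assms(1) unfolding G'_def by simp
  show "\<forall>e\<in>snd (G' Q S n). e \<subseteq> fst (G' Q S n) \<and> card e = 2"
  proof
    fix e assume "e \<in> snd (G' Q S n)"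
    from this[unfolded G'_def snd_conv] show "e \<subseteq> fst (G' Q S n) \<and> card e = 2"
      by (elim UnE CollectE exE conjE insertE emptyE) (use assms(2) in auto)
  qed
qed

lemma dominated_by_Sv_Sp:
  assumes "z \<in> fst (G' Q S n)" "z \<noteq> Vv" "z \<noteq> Xv" "n \<ge> 1" "S n = Q"
  shows "\<exists>y \<in> Sv ` {1..n} \<union> Sp ` {1..n}. z = y \<or> {z, y} \<in> snd (G' Q S n)"
proof (cases z)
  case (Qv q)
  then have "{z, Sp n} \<in> snd (G' Q S n)" using assms edge_Qv_Sp[of n q] by simp
  then show ?thesis using assms(4) by auto
next
  case (Qp q j)
  then have "{z, Sv j} \<in> snd (G' Q S n)" using assms(1) edge_Qp_Sv[of j q] by simp
  then show ?thesis using assms(1) Qp by auto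
next
  case U1
  then have "{z, Sv 1} \<in> snd (G' Q S n)" using assms(4) edge_U1_Sv[of 1] by simp
  then show ?thesis using assms(4) by auto
next
  case Wv
  then have "{z, Sp 1} \<in> snd (G' Q S n)" using assms(4) edge_Wv_Sp[of 1] by simp
  then show ?thesis using assms(4) by auto
qed (use assms in auto)

end

definition hexagon :: "nat \<Rightarrow> 'q vtx" where
  "hexagon k = [U1, Vv, Xv, Wv, Sp 1, Sv 1] ! k"

lemma hexagon_edge: "n \<ge> 1 \<Longrightarrow> k < 6 \<Longrightarrow> {hexagon k, hexagon ((k + 1) mod 6)} \<in> snd (G' Q S n)"
  using edge_U1_Vv edge_Vv_Xv edge_Xv_Wv edge_Wv_Sp[where j = 1] edge_Sv_Sp[where j = 1 and k = 1]
    edge_U1_Sv[where j = 1]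
  by (elim less_6E) (simp_all add: hexagon_def insert_commute)

section \<open>From a 2-colouring to a contraction onto C6\<close>

definition colour_label :: "'q set \<Rightarrow> 'q vtx \<Rightarrow> nat" where
  "colour_label Q1 z = (case z of U1 \<Rightarrow> 0 | Vv \<Rightarrow> 1 | Xv \<Rightarrow> 2 | Wv \<Rightarrow> 3 | Sp j \<Rightarrow> 4 | Sv j \<Rightarrow> 5
     | Qv q \<Rightarrow> if q \<in> Q1 then 4 else 5 | Qp q j \<Rightarrow> if q \<in> Q1 then 4 else 5)"

lemma colour_label_simps [simp]:
  "colour_label Q1 U1 = 0" "colour_label Q1 Vv = 1" "colour_label Q1 Xv = 2" "colour_label Q1 Wv = 3"
  "colour_label Q1 (Sp j) = 4" "colour_label Q1 (Sv j) = 5"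
  "colour_label Q1 (Qv q) = (if q \<in> Q1 then 4 else 5)"
  "colour_label Q1 (Qp q j) = (if q \<in> Q1 then 4 else 5)"
  unfolding colour_label_def by simp_all

lemma colour_label_hexagon: "k < 6 \<Longrightarrow> colour_label Q1 (hexagon k) = k"
  by (elim less_6E) (simp_all add: hexagon_def)

lemma quotient_graph_colour_label:
  assumes "finite Q" "n \<ge> 1" "\<forall>j\<in>{1..n}. S j \<subseteq> Q"
  shows "quotient_graph (G' Q S n) (colour_label Q1) = C6"
proof (rule quotient_graph_eq_C6I[OF simple_graph_G'[OF assms(1,3)]])
  let ?lab = "colour_label Q1"
  have "?lab z < 6" for z by (cases z) simp_all
  moreover have "k \<in> ?lab ` fst (G' Q S n)" if "k < 6" for k
  proof -
    have "hexagon k \<in> fst (G' Q S n)" using that assms(2) by (elim less_6E) (simp_all add: hexagon_def)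
    then show ?thesis using colour_label_hexagon[OF that] by (metis image_eqI)
  qed
  ultimately show "?lab ` fst (G' Q S n) = {0..<6}" by auto
next
  fix a c assume "{a, c} \<in> snd (G' Q S n)"
  from this[unfolded G'_def snd_conv] show "near (colour_label Q1 a) (colour_label Q1 c)"
    by (elim UnE CollectE exE conjE insertE emptyE) (auto simp: doubleton_eq_iff near_def split: if_splits)
next
  fix i j assume "{i, j} \<in> snd C6"
  then obtain k where k: "k < 6" "{i, j} = {k, (k + 1) mod 6}" unfolding C6_def by auto
  then have "{hexagon k, hexagon ((k + 1) mod 6)} \<in> snd (G' Q S n)"
    "colour_label Q1 (hexagon k) = k" "colour_label Q1 (hexagon ((k + 1) mod 6)) = (k + 1) mod 6"
    using hexagon_edge[OF assms(2)] colour_label_hexagon[of k] colour_label_hexagon[of "(k + 1) mod 6"]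
    by simp_all
  moreover from this(1) have "{hexagon ((k + 1) mod 6), hexagon k} \<in> snd (G' Q S n)"
    by (simp add: insert_commute)
  ultimately show "\<exists>a c. {a, c} \<in> snd (G' Q S n) \<and> colour_label Q1 a = i \<and> colour_label Q1 c = j"
    using k(2) by (auto simp: doubleton_eq_iff)
qed

lemma connected_colour_class_4:
  assumes "n \<ge> 1" "\<forall>j\<in>{1..n}. S j \<subseteq> Q" "S n = Q" "two_colouring Q (S ` {1..n}) Q1 Q2"
  shows "connected_set (G' Q S n) {z \<in> fst (G' Q S n). colour_label Q1 z = 4}"
    (is "connected_set ?G ?F")
proof (rule connected_set_if_reachable)
  have n: "n \<in> {1..n}" using assms(1) by simp
  then show "Sp n \<in> ?F" by simp
  have reach_Qv: "(Qv q, Sp n) \<in> (adjacent_in ?G ?F)\<^sup>*" if "q \<in> Q" "q \<in> Q1" for q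
    by (rule adjacent_in_rtrancl_step[where b = "Sp n"])
      (use edge_Qv_Sp[OF n, where q = q] that n assms(3) in simp_all)
  fix x assume x: "x \<in> ?F"
  show "(x, Sp n) \<in> (adjacent_in ?G ?F)\<^sup>*"
  proof (cases x)
    case (Sp j)
    then have j: "j \<in> {1..n}" using x by simp
    then obtain q where q: "q \<in> S j" "q \<in> Q1" using assms(4) unfolding two_colouring_def by blast
    have "q \<in> Q" using assms(2) j q by blast
    show ?thesis
      by (rule adjacent_in_rtrancl_step[where b = "Qv q"])
        (use Sp j q \<open>q \<in> Q\<close> reach_Qv[of q] edge_Qv_Sp[where S = S, OF j q(1)]
          in \<open>simp_all add: insert_commute\<close>)
  next
    case (Qp q j)
    then have jq: "j \<in> {1..n}" "q \<in> S j" "q \<in> Q1" using x by (simp_all split: if_splits)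
    have "q \<in> Q" using assms(2) jq by blast
    show ?thesis
      by (rule adjacent_in_rtrancl_step[where b = "Qv q"])
        (use Qp jq \<open>q \<in> Q\<close> reach_Qv[of q] edge_Qp_Qv[where S = S, OF jq(1,2)] in simp_all)
  qed (use x reach_Qv in \<open>simp_all split: if_splits\<close>)
qed

lemma connected_colour_class_5:
  assumes "n \<ge> 1" "\<forall>j\<in>{1..n}. S j \<subseteq> Q" "S n = Q" "two_colouring Q (S ` {1..n}) Q1 Q2"
  shows "connected_set (G' Q S n) {z \<in> fst (G' Q S n). colour_label Q1 z = 5}"
    (is "connected_set ?G ?F")
proof (rule connected_set_if_reachable)
  have n: "n \<in> {1..n}" using assms(1) by simp
  then show "Sv n \<in> ?F" by simp
  have reach_Qp_n: "(Qp q n, Sv n) \<in> (adjacent_in ?G ?F)\<^sup>*" if "q \<in> Q" "q \<notin> Q1" for q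
    by (rule adjacent_in_rtrancl_step[where b = "Sv n"])
      (use edge_Qp_Sv[OF n, where q = q] that n assms(3) in simp_all)
  have reach_Qv: "(Qv q, Sv n) \<in> (adjacent_in ?G ?F)\<^sup>*" if "q \<in> Q" "q \<notin> Q1" for q
    by (rule adjacent_in_rtrancl_step[where b = "Qp q n"])
      (use edge_Qp_Qv[OF n, where q = q] reach_Qp_n that n assms(3) in \<open>simp_all add: insert_commute\<close>)
  have reach_Qp: "(Qp q j, Sv n) \<in> (adjacent_in ?G ?F)\<^sup>*" if "j \<in> {1..n}" "q \<in> S j" "q \<notin> Q1" for q j
  proof -
    have "q \<in> Q" using assms(2) that by blast
    show ?thesis
      by (rule adjacent_in_rtrancl_step[where b = "Qv q"])
        (use \<open>q \<in> Q\<close> edge_Qp_Qv[where S = S, OF that(1,2)] reach_Qv[of q] that in simp_all)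
  qed
  fix x assume x: "x \<in> ?F"
  show "(x, Sv n) \<in> (adjacent_in ?G ?F)\<^sup>*"
  proof (cases x)
    case (Sv j)
    then have j: "j \<in> {1..n}" using x by simp
    then obtain q where q: "q \<in> S j" "q \<notin> Q1" using assms(4) unfolding two_colouring_def by blast
    show ?thesis
      by (rule adjacent_in_rtrancl_step[where b = "Qp q j"])
        (use Sv j q reach_Qp[OF j q] edge_Qp_Sv[where S = S, OF j q(1)] in \<open>simp_all add: insert_commute\<close>)
  qed (use x reach_Qv reach_Qp in \<open>simp_all split: if_splits\<close>)
qed

lemma connected_fibres_colour_label:
  assumes "n \<ge> 1" "\<forall>j\<in>{1..n}. S j \<subseteq> Q" "S n = Q" "two_colouring Q (S ` {1..n}) Q1 Q2"
  shows "connected_fibres (G' Q S n) (colour_label Q1)"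
proof -
  have "connected_set (G' Q S n) {z \<in> fst (G' Q S n). colour_label Q1 z = k}" if "k < 4" for k
  proof (rule connected_set_subset_singleton)
    show "{z \<in> fst (G' Q S n). colour_label Q1 z = k} \<subseteq> {hexagon k}"
    proof
      fix z assume "z \<in> {z \<in> fst (G' Q S n). colour_label Q1 z = k}"
      with that show "z \<in> {hexagon k}" by (cases z) (auto simp: hexagon_def split: if_splits)
    qed
  qed
  moreover have "colour_label Q1 z < 4 \<or> colour_label Q1 z = 4 \<or> colour_label Q1 z = 5" for z
    by (cases z) simp_all
  ultimately show ?thesis
    using connected_colour_class_4[OF assms] connected_colour_class_5[OF assms]
    unfolding connected_fibres_def by metis
qed

section \<open>From a contraction onto C6 to a 2-colouring\<close>

locale C6_contraction =
  fixes Q :: "'q set" and S :: "nat \<Rightarrow> 'q set" and n :: nat and \<phi> :: "'q vtx \<Rightarrow> nat"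
  assumes finite_Q: "finite Q" and n_ge_2: "n \<ge> 2" and subsets: "\<forall>j\<in>{1..n}. S j \<subseteq> Q"
    and S_n: "S n = Q"
    and quotient: "quotient_graph (G' Q S n) \<phi> = C6" and fibres: "connected_fibres (G' Q S n) \<phi>"
begin

lemma simple: "simple_graph (G' Q S n)"
  using simple_graph_G' finite_Q subsets by blast

lemma label_range: "\<phi> ` fst (G' Q S n) = {0..<6}"
  using quotient_graph_eq_C6D(1)[OF quotient] .

lemma label_lt: "z \<in> fst (G' Q S n) \<Longrightarrow> \<phi> z < 6"
  using label_range by auto

lemma label_onto: "k < 6 \<Longrightarrow> \<exists>z\<in>fst (G' Q S n). \<phi> z = k"
  using label_range by (metis atLeastLessThan_iff imageE zero_le)

lemma edge_near: "{a, c} \<in> snd (G' Q S n) \<Longrightarrow> near (\<phi> a) (\<phi> c)"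
  using quotient_graph_eq_C6D(2)[OF quotient] .

lemma C6_edge_realised: "{i, j} \<in> snd C6 \<Longrightarrow> \<exists>a c. {a, c} \<in> snd (G' Q S n) \<and> \<phi> a = i \<and> \<phi> c = j"
  using quotient_graph_eq_C6D(3)[OF quotient] .

lemma fibre_neighbour:
  assumes "a \<in> fst (G' Q S n)" "z \<in> fst (G' Q S n)" "\<phi> z = \<phi> a" "z \<noteq> a"
  obtains b where "b \<in> fst (G' Q S n)" "\<phi> b = \<phi> a" "b \<noteq> a" "{a, b} \<in> snd (G' Q S n)"
proof -
  let ?X = "{y \<in> fst (G' Q S n). \<phi> y = \<phi> a}"
  have "connected_set (G' Q S n) ?X" using fibres assms(1) unfolding connected_fibres_def by blast
  moreover have "a \<in> ?X" "?X \<noteq> {a}" using assms by auto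
  ultimately show ?thesis using that by (auto elim: connected_set_neighbour)
qed

lemma relabel: "quotient_graph C6 \<sigma> = C6 \<Longrightarrow> C6_contraction Q S n (\<sigma> \<circ> \<phi>)"
  using C6_relabel[OF quotient fibres] finite_Q n_ge_2 subsets S_n by unfold_locales simp_all

lemma free_label: "\<exists>i<6. \<forall>z\<in>fst (G' Q S n). \<phi> z = i \<longrightarrow> z = Vv \<or> z = Xv"
proof -
  let ?A = "\<phi> ` Sv ` {1..n}" and ?B = "\<phi> ` Sp ` {1..n}"
  have "1 \<in> {1..n}" using n_ge_2 by simp
  then have "\<phi> (Sv 1) \<in> ?A" "\<phi> (Sp 1) \<in> ?B" by auto
  moreover have "?A \<subseteq> {..<6}" "?B \<subseteq> {..<6}" using label_lt by auto
  moreover have "\<forall>x\<in>?A. \<forall>y\<in>?B. near x y"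
    using edge_near[OF edge_Sv_Sp] by blast
  ultimately obtain m where m: "m < 6" "\<forall>y\<in>?A \<union> ?B. near m y"
    by (rule near_bicomplete_centre)
  have "z = Vv \<or> z = Xv" if z: "z \<in> fst (G' Q S n)" "\<phi> z = (m + 3) mod 6" for z
  proof (rule ccontr)
    assume "\<not> (z = Vv \<or> z = Xv)"
    then obtain y where y: "y \<in> Sv ` {1..n} \<union> Sp ` {1..n}" "z = y \<or> {z, y} \<in> snd (G' Q S n)"
      using dominated_by_Sv_Sp[OF z(1)] n_ge_2 S_n by auto
    then have "near (\<phi> z) (\<phi> y)" "near m (\<phi> y)" "\<phi> y < 6"
      using edge_near m(2) label_lt[of y] by auto
    then show False using near_antipode[OF m(1)] z(2) by simp
  qed
  then show ?thesis using m(1) by (intro exI[of _ "(m + 3) mod 6"]) auto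
qed

lemma labels_U1_Vv_Xv_Wv_distinct:
  assumes free: "\<forall>z\<in>fst (G' Q S n). \<phi> z = 0 \<longrightarrow> z = Vv \<or> z = Xv"
  shows "distinct [\<phi> U1, \<phi> Vv, \<phi> Xv, \<phi> Wv]"
proof (rule closed_walk_through_0_distinct[where t = "\<phi> (Sp 1)" and s = "\<phi> (Sv 1)"])
  have n: "1 \<in> {1..n}" using n_ge_2 by simp
  then show "\<phi> U1 < 6" "\<phi> Vv < 6" "\<phi> Xv < 6" "\<phi> Wv < 6" "\<phi> (Sp 1) < 6" "\<phi> (Sv 1) < 6"
    using label_lt by simp_all
  show "\<phi> U1 \<noteq> 0" "\<phi> Wv \<noteq> 0" "\<phi> (Sp 1) \<noteq> 0" "\<phi> (Sv 1) \<noteq> 0"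
    using free n by auto
  have "near (\<phi> (hexagon k)) (\<phi> (hexagon ((k + 1) mod 6)))" if "k < 6" for k
    using edge_near[OF hexagon_edge[OF _ that]] n_ge_2 by simp
  from this[of 0] this[of 1] this[of 2] this[of 3] this[of 4] this[of 5]
  show "near (\<phi> U1) (\<phi> Vv)" "near (\<phi> Vv) (\<phi> Xv)" "near (\<phi> Xv) (\<phi> Wv)"
    "near (\<phi> Wv) (\<phi> (Sp 1))" "near (\<phi> (Sp 1)) (\<phi> (Sv 1))" "near (\<phi> (Sv 1)) (\<phi> U1)"
    by (simp_all add: hexagon_def)
  fix j :: nat assume "j = 1 \<or> j = 5"
  then have "{0, j} \<in> snd C6" by (auto simp: C6_edge_iff near_def)
  then obtain a c where ac: "{a, c} \<in> snd (G' Q S n)" "\<phi> a = 0" "\<phi> c = j"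
    using C6_edge_realised by blast
  then have "a = Vv \<or> a = Xv" using free edge_vertices[OF simple ac(1)] by blast
  then show "\<phi> Vv = 0 \<and> (\<phi> U1 = j \<or> \<phi> Xv = j) \<or> \<phi> Xv = 0 \<and> (\<phi> Vv = j \<or> \<phi> Wv = j)"
  proof
    assume "a = Vv"
    then show ?thesis using ac neighbour_Vv[of c] by auto
  next
    assume "a = Xv"
    then show ?thesis using ac neighbour_Xv[of c] by auto
  qed
qed

lemma free_label_automorphism:
  obtains \<sigma> where "quotient_graph C6 \<sigma> = C6"
    "\<forall>z\<in>fst (G' Q S n). \<sigma> (\<phi> z) = 0 \<longrightarrow> z = Vv \<or> z = Xv"
proof -
  obtain i where i: "i < 6" "\<forall>z\<in>fst (G' Q S n). \<phi> z = i \<longrightarrow> z = Vv \<or> z = Xv"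
    using free_label by blast
  have "{i, (i + 1) mod 6} \<in> snd C6" using i(1) unfolding C6_def by auto
  then obtain \<sigma> where \<sigma>: "quotient_graph C6 \<sigma> = C6" "\<sigma> i = 0"
    by (rule C6_edge_normalisation)
  have "z = Vv \<or> z = Xv" if "z \<in> fst (G' Q S n)" "\<sigma> (\<phi> z) = 0" for z
    using inj_onD[OF C6_automorphism_inj[OF \<sigma>(1)], of "\<phi> z" i] i label_lt[OF that(1)] that \<sigma>(2)
    by auto
  with \<sigma>(1) show ?thesis using that by blast
qed

lemma distinct_path_labels_automorphism:
  assumes "distinct [\<phi> U1, \<phi> Vv, \<phi> Xv, \<phi> Wv]"
  obtains \<sigma> where "quotient_graph C6 \<sigma> = C6"
    "\<sigma> (\<phi> U1) = 0" "\<sigma> (\<phi> Vv) = 1" "\<sigma> (\<phi> Xv) = 2" "\<sigma> (\<phi> Wv) = 3"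
proof -
  have "{\<phi> U1, \<phi> Vv} \<in> snd C6"
    using edge_near[OF edge_U1_Vv] label_lt assms by (simp add: C6_edge_iff)
  then obtain \<sigma> where \<sigma>: "quotient_graph C6 \<sigma> = C6" "\<sigma> (\<phi> U1) = 0" "\<sigma> (\<phi> Vv) = 1"
    by (rule C6_edge_normalisation)
  interpret L: C6_contraction Q S n "\<sigma> \<circ> \<phi>" by (rule relabel[OF \<sigma>(1)])
  have "set [\<phi> U1, \<phi> Vv, \<phi> Xv, \<phi> Wv] \<subseteq> {0..<6}" using label_lt by simp
  with C6_automorphism_inj[OF \<sigma>(1)] have "inj_on \<sigma> (set [\<phi> U1, \<phi> Vv, \<phi> Xv, \<phi> Wv])"
    by (rule inj_on_subset)
  with assms have "distinct (map \<sigma> [\<phi> U1, \<phi> Vv, \<phi> Xv, \<phi> Wv])" unfolding distinct_map by blast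
  moreover have "near (\<sigma> (\<phi> Vv)) (\<sigma> (\<phi> Xv))" "near (\<sigma> (\<phi> Xv)) (\<sigma> (\<phi> Wv))"
    "\<sigma> (\<phi> Xv) < 6" "\<sigma> (\<phi> Wv) < 6"
    using L.edge_near[OF edge_Vv_Xv] L.edge_near[OF edge_Xv_Wv] L.label_lt by simp_all
  ultimately have "\<sigma> (\<phi> Xv) = 2" "\<sigma> (\<phi> Wv) = 3" using \<sigma>(2,3) by (auto simp: near_def)
  then show ?thesis using that[of \<sigma>] \<sigma> by blast
qed

lemma normalising_automorphism:
  obtains \<sigma> where "quotient_graph C6 \<sigma> = C6"
    "\<sigma> (\<phi> U1) = 0" "\<sigma> (\<phi> Vv) = 1" "\<sigma> (\<phi> Xv) = 2" "\<sigma> (\<phi> Wv) = 3"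
proof -
  obtain \<sigma>1 where \<sigma>1: "quotient_graph C6 \<sigma>1 = C6"
    "\<forall>z\<in>fst (G' Q S n). \<sigma>1 (\<phi> z) = 0 \<longrightarrow> z = Vv \<or> z = Xv"
    by (rule free_label_automorphism)
  interpret L: C6_contraction Q S n "\<sigma>1 \<circ> \<phi>" by (rule relabel[OF \<sigma>1(1)])
  have "distinct [\<sigma>1 (\<phi> U1), \<sigma>1 (\<phi> Vv), \<sigma>1 (\<phi> Xv), \<sigma>1 (\<phi> Wv)]"
    using L.labels_U1_Vv_Xv_Wv_distinct \<sigma>1(2) by simp
  then obtain \<sigma>2 where "quotient_graph C6 \<sigma>2 = C6" "\<sigma>2 (\<sigma>1 (\<phi> U1)) = 0" "\<sigma>2 (\<sigma>1 (\<phi> Vv)) = 1"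
    "\<sigma>2 (\<sigma>1 (\<phi> Xv)) = 2" "\<sigma>2 (\<sigma>1 (\<phi> Wv)) = 3"
    using L.distinct_path_labels_automorphism by auto
  moreover from this(1) have "quotient_graph C6 (\<sigma>2 \<circ> \<sigma>1) = C6"
    using \<sigma>1(1) quotient_graph_comp by metis
  ultimately show ?thesis using that[of "\<sigma>2 \<circ> \<sigma>1"] by simp
qed

end

locale C6_normal = C6_contraction +
  assumes normal: "\<phi> U1 = 0" "\<phi> Vv = 1" "\<phi> Xv = 2" "\<phi> Wv = 3"
begin

lemma other_index: "j \<in> {1..n} \<Longrightarrow> \<exists>j'\<in>{1..n}. j' \<noteq> j"
  using n_ge_2 by (intro bexI[of _ "if j = 1 then 2 else 1"]) auto

lemma S_labels:
  "(\<forall>j\<in>{1..n}. \<phi> (Sv j) = 1 \<and> \<phi> (Sp j) = 2) \<or> (\<forall>j\<in>{1..n}. \<phi> (Sv j) = 5 \<and> \<phi> (Sp j) = 4)"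
proof -
  have st: "\<phi> (Sv j) = 1 \<and> \<phi> (Sp k) = 2 \<or> \<phi> (Sv j) = 5 \<and> \<phi> (Sp k) = 4"
    if "j \<in> {1..n}" "k \<in> {1..n}" for j k
    using near_0_and_3 label_lt edge_near[OF edge_U1_Sv[OF that(1)]] edge_near[OF edge_Wv_Sp[OF that(2)]]
      edge_near[OF edge_Sv_Sp[OF that]] that normal by simp
  have "1 \<in> {1..n}" using n_ge_2 by simp
  from st[OF this this] st[OF _ this] st[OF this] show ?thesis by fastforce
qed

lemma S_labels_not_1_2: "\<not> (\<forall>j\<in>{1..n}. \<phi> (Sv j) = 1 \<and> \<phi> (Sp j) = 2)"
proof
  assume S: "\<forall>j\<in>{1..n}. \<phi> (Sv j) = 1 \<and> \<phi> (Sp j) = 2"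
  have "\<phi> z \<le> 3" if "z \<in> fst (G' Q S n)" for z
  proof (cases z)
    case (Qv q)
    then have "n \<in> {1..n}" "q \<in> S n" using that n_ge_2 S_n by auto
    then have "near (\<phi> z) (\<phi> (Sp n))" using edge_near[OF edge_Qv_Sp] Qv by blast
    then show ?thesis using S \<open>n \<in> {1..n}\<close> by (auto simp: near_def)
  next
    case (Qp q j)
    then have "near (\<phi> z) (\<phi> (Sv j))" "j \<in> {1..n}" using that edge_near[OF edge_Qp_Sv] by auto
    then show ?thesis using S by (auto simp: near_def)
  qed (use that S normal in auto)
  then show False using label_onto[of 4] by fastforce
qed

lemma S_labels_5_4: "j \<in> {1..n} \<Longrightarrow> \<phi> (Sv j) = 5 \<and> \<phi> (Sp j) = 4"
  using S_labels S_labels_not_1_2 by blast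

lemma fibre_3: "z \<in> fst (G' Q S n) \<Longrightarrow> \<phi> z = 3 \<Longrightarrow> z = Wv"
proof (rule ccontr)
  assume "z \<in> fst (G' Q S n)" "\<phi> z = 3" "z \<noteq> Wv"
  then obtain b where b: "b \<in> fst (G' Q S n)" "\<phi> b = \<phi> Wv" "b \<noteq> Wv" "{Wv, b} \<in> snd (G' Q S n)"
    using normal(4) by (rule_tac fibre_neighbour[of Wv z]) simp_all
  from neighbour_Wv[OF b(4)] show False using b(2) normal S_labels_5_4 by auto
qed

lemma Qv_label: "q \<in> Q \<Longrightarrow> \<phi> (Qv q) = 4 \<or> \<phi> (Qv q) = 5"
proof -
  assume q: "q \<in> Q"
  have n: "n \<in> {1..n}" using n_ge_2 by simp
  then have "near (\<phi> (Qv q)) 4" using edge_near[OF edge_Qv_Sp[OF n]] q S_n S_labels_5_4 by auto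
  moreover have "\<phi> (Qv q) \<noteq> 3" "\<phi> (Qv q) < 6" using fibre_3[of "Qv q"] label_lt[of "Qv q"] q by auto
  ultimately show ?thesis by (auto simp: near_def)
qed

lemma meets_label_4: "j \<in> {1..n} \<Longrightarrow> \<exists>q\<in>S j. \<phi> (Qv q) = 4"
proof -
  assume j: "j \<in> {1..n}"
  then obtain j' where j': "j' \<in> {1..n}" "j' \<noteq> j" using other_index by blast
  then obtain b where b: "b \<in> fst (G' Q S n)" "\<phi> b = \<phi> (Sp j)" "b \<noteq> Sp j" "{Sp j, b} \<in> snd (G' Q S n)"
    using j S_labels_5_4 by (rule_tac fibre_neighbour[of "Sp j" "Sp j'"]) simp_all
  from neighbour_Sp[OF b(4)] show ?thesis using b(2) j normal S_labels_5_4 by auto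
qed

lemma meets_label_5: "j \<in> {1..n} \<Longrightarrow> \<exists>q\<in>S j. \<phi> (Qv q) = 5"
proof (rule ccontr)
  assume j: "j \<in> {1..n}" and none: "\<not> (\<exists>q\<in>S j. \<phi> (Qv q) = 5)"
  let ?X = "{y \<in> fst (G' Q S n). \<phi> y = 5}"
  let ?Y = "insert (Sv j) {Qp q j | q. q \<in> S j \<and> \<phi> (Qp q j) = 5}"
  obtain j' where j': "j' \<in> {1..n}" "j' \<noteq> j" using other_index j by blast
  have "Sv j \<in> fst (G' Q S n)" using j by simp
  with fibres have "connected_set (G' Q S n) {y \<in> fst (G' Q S n). \<phi> y = \<phi> (Sv j)}"
    unfolding connected_fibres_def by (rule bspec)
  then have X: "connected_set (G' Q S n) ?X" using S_labels_5_4[OF j] by simp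
  have "?Y \<subseteq> ?X" "?Y \<noteq> {}" "?Y \<noteq> ?X" using j j' S_labels_5_4 by auto
  then obtain a b where ab: "a \<in> ?Y" "b \<in> ?X - ?Y" "{a, b} \<in> snd (G' Q S n)"
    using X[unfolded connected_set_def, rule_format, of ?Y] by blast
  from ab(1) show False
  proof
    assume "a = Sv j"
    with ab(3) have "{Sv j, b} \<in> snd (G' Q S n)" by simp
    from neighbour_Sv[OF this] show False using ab normal S_labels_5_4 by auto
  next
    assume "a \<in> {Qp q j | q. q \<in> S j \<and> \<phi> (Qp q j) = 5}"
    then obtain q where q: "q \<in> S j" "a = Qp q j" by blast
    with ab(3) have "{Qp q j, b} \<in> snd (G' Q S n)" by simp
    from neighbour_Qp[OF this] show False using ab q none by auto
  qed
qed

lemma colouring: "two_colouring Q (S ` {1..n}) {q \<in> Q. \<phi> (Qv q) = 4} {q \<in> Q. \<phi> (Qv q) = 5}"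
  unfolding two_colouring_def using Qv_label meets_label_4 meets_label_5 subsets by fastforce

end

lemma (in C6_contraction) two_colouring_exists: "\<exists>Q1 Q2. two_colouring Q (S ` {1..n}) Q1 Q2"
proof -
  obtain \<sigma> where \<sigma>: "quotient_graph C6 \<sigma> = C6"
    "\<sigma> (\<phi> U1) = 0" "\<sigma> (\<phi> Vv) = 1" "\<sigma> (\<phi> Xv) = 2" "\<sigma> (\<phi> Wv) = 3"
    by (rule normalising_automorphism)
  interpret C6_normal Q S n "\<sigma> \<circ> \<phi>"
    using relabel[OF \<sigma>(1)] \<sigma>(2-5) by (simp add: C6_normal_def C6_normal_axioms_def)
  show ?thesis using colouring by blast
qed

theorem lemma6:
  fixes Q :: "'q set" and S :: "nat \<Rightarrow> 'q set" and n :: nat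
  assumes "finite Q"
    and "n \<ge> 2"
    and "\<forall>j\<in>{1..n}. S j \<noteq> {} \<and> S j \<subseteq> Q"
    and "S n = Q"
  shows "(\<exists>Q1 Q2. two_colouring Q (S ` {1..n}) Q1 Q2) \<longleftrightarrow> has_contraction (G' Q S n) C6"
proof -
  have subsets: "\<forall>j\<in>{1..n}. S j \<subseteq> Q" using assms(3) by blast
  have "(\<exists>Q1 Q2. two_colouring Q (S ` {1..n}) Q1 Q2) \<longleftrightarrow>
      (\<exists>\<phi>. connected_fibres (G' Q S n) \<phi> \<and> quotient_graph (G' Q S n) \<phi> = C6)"
  proof
    assume "\<exists>Q1 Q2. two_colouring Q (S ` {1..n}) Q1 Q2"
    then obtain Q1 Q2 where colouring: "two_colouring Q (S ` {1..n}) Q1 Q2" by blast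
    have "n \<ge> 1" using assms(2) by simp
    then show "\<exists>\<phi>. connected_fibres (G' Q S n) \<phi> \<and> quotient_graph (G' Q S n) \<phi> = C6"
      using connected_fibres_colour_label[OF _ subsets assms(4) colouring]
        quotient_graph_colour_label[OF assms(1) _ subsets] by blast
  next
    assume "\<exists>\<phi>. connected_fibres (G' Q S n) \<phi> \<and> quotient_graph (G' Q S n) \<phi> = C6"
    then obtain \<phi> where "connected_fibres (G' Q S n) \<phi>" "quotient_graph (G' Q S n) \<phi> = C6" by blast
    then interpret C6_contraction Q S n \<phi> using assms(1,2,4) subsets by unfold_locales
    show "\<exists>Q1 Q2. two_colouring Q (S ` {1..n}) Q1 Q2" by (rule two_colouring_exists)
  qed
  also have "\<dots> \<longleftrightarrow> has_contraction (G' Q S n) C6"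
    using has_contraction_iff_quotient_graph[OF simple_graph_G'[OF assms(1) subsets] simple_graph_C6]
    by simp
  finally show ?thesis .
qed

end
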